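(* Let $n\ge 3$ and let $i\ge 0$ be an integer with $i>(n-4)(n-1)$. Then the map $\mathrm{per}$ restricts to a bijection from $\mathcal{L}_i$ onto $\mathcal{L}_{i+n-1}$.
   Context: Fix an integer $n\ge 3$. A partition is a sequence $\Lambda=(\lambda_j)_{j\ge1}$ of non-negative integers with finite support; $\mathrm{wt}(\Lambda)=\sum_j j\lambda_j$; $\mathrm{Part}(k)$ is the set of partitions with $\lambda_j=0$ for $j>k$. Write $x^\Lambda=\prod_j x_j^{\lambda_j}$, $\deg(x^\Lambda)=\sum_j\lambda_j$. $\mathcal{B}=\{x^\Lambda\partial_k : 1\le k\le n,\ \Lambda\in\mathrm{Part}(k-1)\}$ (formal monomials times the symbol $\partial_k$). For an integer $i\ge-1$, let $r_i\in\{1,\dots,n-1\}$ with $i\equiv r_i\pmod{n-1}$ and $h_i=\lfloor (i-1)/(n-1)\rfloor+1$. Define $\mathrm{WD}(x^\Lambda\partial_k)=\mathrm{wt}(\Lambda)-\deg(x^\Lambda)+n-k$ and $\mathrm{lev}_i(x^\Lambda\partial_k)=h_i\,\mathrm{WD}(x^\Lambda\partial_k)+\deg(x^\Lambda)-1$. For $i\ge-1$, $\mathcal{N}_i=\{b\in\mathcal{B}: \mathrm{lev}_j(b)\le j\text{ for some integer } -1\le j\le i\}$, and $\mathcal{L}_i=\mathcal{N}_i\setminus\mathcal{N}_{i-1}$ for $i\ge0$. For $x^\Lambda\partial_k\in\mathcal{B}$ with $\mathrm{WD}(x^\Lambda\partial_k)\le n-1$, the period function is $\mathrm{per}(x^\Lambda\partial_k)=x_1^{\,n-1-\mathrm{WD}(x^\Lambda\partial_k)}x^\Lambda\partial_k$.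 *)

theory Defs
  imports Main
begin

text \<open>A basis element x^Lambda d_k is represented as a pair (Lambda, k), where
  Lambda :: nat => nat gives the exponents lambda_j (j >= 1); index 0 is unused (always 0).\<close>

type_synonym bas = "(nat \<Rightarrow> nat) \<times> nat"

definition Bset :: "nat \<Rightarrow> bas set" where
  "Bset n = {(lam, k). 1 \<le> k \<and> k \<le> n \<and> (\<forall>j. (j = 0 \<or> k \<le> j) \<longrightarrow> lam j = 0)}"

definition wt :: "(nat \<Rightarrow> nat) \<Rightarrow> nat \<Rightarrow> nat" where
  "wt lam k = (\<Sum>j\<in>{1..<k}. j * lam j)"

definition dg :: "(nat \<Rightarrow> nat) \<Rightarrow> nat \<Rightarrow> nat" where
  "dg lam k = (\<Sum>j\<in>{1..<k}. lam j)"

definition WD :: "nat \<Rightarrow> bas \<Rightarrow> int" where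
  "WD n b = (case b of (lam, k) \<Rightarrow> int (wt lam k) - int (dg lam k) + int n - int k)"

definition hh :: "nat \<Rightarrow> int \<Rightarrow> int" where
  "hh n i = (i - 1) div (int n - 1) + 1"

definition lev :: "nat \<Rightarrow> int \<Rightarrow> bas \<Rightarrow> int" where
  "lev n i b = hh n i * WD n b + int (dg (fst b) (snd b)) - 1"

definition Nset :: "nat \<Rightarrow> int \<Rightarrow> bas set" where
  "Nset n i = {b \<in> Bset n. \<exists>j. -1 \<le> j \<and> j \<le> i \<and> lev n j b \<le> j}"

definition Lset :: "nat \<Rightarrow> int \<Rightarrow> bas set" where
  "Lset n i = Nset n i - Nset n (i - 1)"

text \<open>per(x^Lambda d_k) = x_1^(n-1-WD) x^Lambda d_k (meaningful when WD <= n-1).\<close>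
definition per :: "nat \<Rightarrow> bas \<Rightarrow> bas" where
  "per n b = (case b of (lam, k) \<Rightarrow>
     (lam(1 := lam 1 + nat (int n - 1 - WD n b)), k))"

end

theory Submission
  imports Defs
begin

text \<open>The level condition lev_j(b) \<le> j depends on b only through w = WD(b) and the degree d
  of b. Since h(j + n - 1) = h(j) + 1, the condition at j for (w, d) is the condition at
  j + n - 1 for (w, d + n - 1 - w), which is the data of per(b): multiplying by a power of x_1
  does not change WD. Hence per maps L_i injectively into L_(i+n-1); elements of L_i have
  w \<le> n - 2 and d \<ge> 1, which is what shifting back requires. For surjectivity, an element c
  of L_(i+n-1) not divisible by x_1^(n-1-w) has degree d \<le> n - 2, so it already lies in
  N_((d-1)(n-1)), which is contained in N_(i+n-2) as soon as i > (n - 4)(n - 1).\<close>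

lemma hh_bounds:
  assumes "2 \<le> n"
  shows "(hh n j - 1) * (int n - 1) < j" and "j \<le> hh n j * (int n - 1)"
proof -
  have N: "0 < int n - 1" using assms by simp
  have "j - 1 = (int n - 1) * ((j - 1) div (int n - 1)) + (j - 1) mod (int n - 1)" by simp
  moreover have "0 \<le> (j - 1) mod (int n - 1)" "(j - 1) mod (int n - 1) < int n - 1"
    using N by simp_all
  ultimately show "(hh n j - 1) * (int n - 1) < j" "j \<le> hh n j * (int n - 1)"
    unfolding hh_def by (simp_all add: algebra_simps)
qed

lemma hh_eqI:
  assumes "2 \<le> n" "(q - 1) * (int n - 1) < j" "j \<le> q * (int n - 1)"
  shows "hh n j = q"
proof -
  have "(j - 1) div (int n - 1) = q - 1"
    by (rule int_div_pos_eq[where r = "j - 1 - (int n - 1) * (q - 1)"]) (use assms in \<open>auto simp: algebra_simps\<close>)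
  then show ?thesis unfolding hh_def by simp
qed

lemma hh_add_period: "2 \<le> n \<Longrightarrow> hh n (j + (int n - 1)) = hh n j + 1"
  using hh_bounds[of n j] by (intro hh_eqI) (auto simp: algebra_simps)

lemma hh_minus_one: "3 \<le> n \<Longrightarrow> hh n (-1) = 0"
  by (rule hh_eqI) auto

lemma hh_mult_period: "2 \<le> n \<Longrightarrow> hh n (q * (int n - 1)) = q"
  by (rule hh_eqI) (auto simp: algebra_simps)

lemma hh_nonneg:
  assumes "3 \<le> n" "-1 \<le> j"
  shows "0 \<le> hh n j"
proof (rule ccontr)
  assume "\<not> 0 \<le> hh n j"
  then have "hh n j * (int n - 1) \<le> -1 * (int n - 1)"
    using assms(1) by (intro mult_right_mono) auto
  then show False using hh_bounds(2)[of n j] assms by simp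
qed

lemma hh_ge_minus_one:
  assumes "3 \<le> n" "- int n \<le> j"
  shows "-1 \<le> hh n j"
proof (rule ccontr)
  assume "\<not> -1 \<le> hh n j"
  then have "hh n j * (int n - 1) \<le> -2 * (int n - 1)"
    using assms(1) by (intro mult_right_mono) auto
  then show False using hh_bounds(2)[of n j] assms by simp
qed

lemma dg_le_wt: "dg lam k \<le> wt lam k"
  unfolding dg_def wt_def by (rule sum_mono) auto

lemma wt_le_mult_dg: "wt lam k \<le> (k - 1) * dg lam k"
  unfolding dg_def wt_def sum_distrib_left by (rule sum_mono) auto

lemma two_dg_le_wt_plus: "2 * dg lam k \<le> wt lam k + lam 1"
proof -
  have "2 * dg lam k = (\<Sum>j\<in>{1..<k}. 2 * lam j)"
    unfolding dg_def by (simp add: sum_distrib_left)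
  also have "\<dots> \<le> (\<Sum>j\<in>{1..<k}. j * lam j + (if j = 1 then lam j else 0))"
    by (rule sum_mono) (auto simp: Suc_le_eq)
  also have "\<dots> \<le> wt lam k + lam 1"
    unfolding wt_def sum.distrib by (auto simp: sum.delta)
  finally show ?thesis .
qed

lemma WD_nonneg: "0 \<le> WD n b" if "b \<in> Bset n"
  using that dg_le_wt[of "fst b" "snd b"] by (auto simp: WD_def Bset_def)

lemma WD_k_eq_1: "WD n (lam, 1) = int n - 1"
  by (simp add: WD_def wt_def dg_def)

lemma sum_fun_upd_1:
  fixes f :: "nat \<Rightarrow> nat \<Rightarrow> int"
  assumes "2 \<le> k"
  shows "(\<Sum>j\<in>{1..<k}. f j ((lam(1 := x)) j)) = (\<Sum>j\<in>{1..<k}. f j (lam j)) - f 1 (lam 1) + f 1 x"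
proof -
  have split: "sum g {1..<k} = g 1 + sum g ({1..<k} - {1})" for g :: "nat \<Rightarrow> int"
    using assms by (intro sum.remove) auto
  have "(\<Sum>j\<in>{1..<k} - {1}. f j ((lam(1 := x)) j)) = (\<Sum>j\<in>{1..<k} - {1}. f j (lam j))"
    by (rule sum.cong) auto
  then show ?thesis by (simp only: split) simp
qed

lemma dg_fun_upd_1:
  "2 \<le> k \<Longrightarrow> int (dg (lam(1 := x)) k) = int (dg lam k) - int (lam 1) + int x"
  using sum_fun_upd_1[of k "\<lambda>_ y. int y"] by (simp add: dg_def)

lemma wt_fun_upd_1:
  "2 \<le> k \<Longrightarrow> int (wt (lam(1 := x)) k) = int (wt lam k) - int (lam 1) + int x"
  using sum_fun_upd_1[of k "\<lambda>j y. int j * int y"] by (simp add: wt_def)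

lemma WD_fun_upd_1: "2 \<le> k \<Longrightarrow> WD n (lam(1 := x), k) = WD n (lam, k)"
  using dg_fun_upd_1[of k lam x] wt_fun_upd_1[of k lam x] by (simp add: WD_def)

lemma two_le_snd_if_WD_le:
  assumes "b \<in> Bset n" "WD n b \<le> int n - 2"
  shows "2 \<le> snd b"
proof (rule ccontr)
  assume "\<not> 2 \<le> snd b"
  with assms(1) have "b = (fst b, 1)" by (auto simp: Bset_def)
  then have "WD n b = int n - 1" by (metis WD_k_eq_1)
  with assms(2) show False by simp
qed

lemma WD_per: "2 \<le> snd b \<Longrightarrow> WD n (per n b) = WD n b"
  by (cases b) (simp add: per_def WD_fun_upd_1[unfolded One_nat_def])

lemma dg_per:
  assumes "2 \<le> snd b" "WD n b \<le> int n - 1"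
  shows "int (dg (fst (per n b)) (snd (per n b))) = int (dg (fst b) (snd b)) + (int n - 1 - WD n b)"
  using assms dg_fun_upd_1 by (cases b) (simp add: per_def)

lemma per_in_Bset: "b \<in> Bset n \<Longrightarrow> 2 \<le> snd b \<Longrightarrow> per n b \<in> Bset n"
  by (cases b) (auto simp: per_def Bset_def)

lemma inj_on_per: "inj_on (per n) {b. 2 \<le> snd b}"
proof (rule inj_onI)
  fix b c assume b: "b \<in> {b. 2 \<le> snd b}" and c: "c \<in> {b. 2 \<le> snd b}" and eq: "per n b = per n c"
  obtain lam k mu l where bc: "b = (lam, k)" "c = (mu, l)" by fastforce
  have "WD n b = WD n c" using WD_per b c eq by (metis mem_Collect_eq)
  then have upd: "lam(1 := lam 1 + nat (int n - 1 - WD n b)) = mu(1 := mu 1 + nat (int n - 1 - WD n b))"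
    and "k = l"
    using eq unfolding per_def bc by simp_all
  have "lam = mu"
  proof
    fix j show "lam j = mu j" using fun_cong[OF upd, of j] by (cases "j = 1") auto
  qed
  with \<open>k = l\<close> show "b = c" by (simp add: bc)
qed

definition reaches_level :: "nat \<Rightarrow> int \<Rightarrow> int \<Rightarrow> int \<Rightarrow> bool" where
  "reaches_level n i w d \<longleftrightarrow> (\<exists>j. -1 \<le> j \<and> j \<le> i \<and> hh n j * w + d - 1 \<le> j)"

lemma Nset_iff:
  "b \<in> Nset n i \<longleftrightarrow> b \<in> Bset n \<and> reaches_level n i (WD n b) (int (dg (fst b) (snd b)))"
  by (simp add: Nset_def reaches_level_def lev_def)

lemma Lset_iff:
  "b \<in> Lset n i \<longleftrightarrow> b \<in> Bset n \<and> reaches_level n i (WD n b) (int (dg (fst b) (snd b)))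
     \<and> \<not> reaches_level n (i - 1) (WD n b) (int (dg (fst b) (snd b)))"
  by (auto simp: Lset_def Nset_iff)

lemma reaches_level_mono: "i \<le> i' \<Longrightarrow> reaches_level n i w d \<Longrightarrow> reaches_level n i' w d"
  unfolding reaches_level_def by force

lemma reaches_level_dg_0: "3 \<le> n \<Longrightarrow> -1 \<le> i \<Longrightarrow> reaches_level n i w 0"
  unfolding reaches_level_def by (intro exI[of _ "-1"]) (simp add: hh_minus_one)

lemma reaches_level_shift:
  assumes "2 \<le> n" "reaches_level n i w d"
  shows "reaches_level n (i + (int n - 1)) w (d + (int n - 1) - w)"
proof -
  obtain j where "-1 \<le> j" "j \<le> i" "hh n j * w + d - 1 \<le> j"
    using assms(2) by (auto simp: reaches_level_def)
  moreover have "hh n (j + (int n - 1)) = hh n j + 1" using assms(1) by (rule hh_add_period)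
  ultimately show ?thesis unfolding reaches_level_def using assms(1)
    by (intro exI[of _ "j + (int n - 1)"]) (simp add: algebra_simps)
qed

lemma reaches_level_unshift:
  assumes n: "3 \<le> n" and i: "-1 \<le> i" and d: "0 \<le> d" and w: "0 \<le> w" "w \<le> int n - 2"
    and shifted: "reaches_level n (i + (int n - 1)) w (d + (int n - 1) - w)"
  shows "reaches_level n i w d"
proof -
  obtain j' where j': "-1 \<le> j'" "j' \<le> i + (int n - 1)"
    "hh n j' * w + (d + (int n - 1) - w) - 1 \<le> j'"
    using shifted unfolding reaches_level_def by blast
  define j where "j = j' - (int n - 1)"
  have j: "- int n \<le> j" "j \<le> i" using j' n by (simp_all add: j_def)
  have "hh n j' = hh n j + 1" using hh_add_period[of n j] n by (simp add: j_def)
  then have at_j: "hh n j * w + d - 1 \<le> j"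
    using j'(3) by (simp add: j_def algebra_simps)
  show ?thesis
  proof (cases "-1 \<le> j")
    case True
    with j(2) at_j show ?thesis unfolding reaches_level_def by blast
  next
    case False
    txt \<open>A witness below -1 forces d = 0, and then -1 itself is a witness.\<close>
    have "d \<le> 0"
    proof (cases "hh n j = -1")
      case True
      then have "j \<le> -(int n - 1)" using hh_bounds(2)[of n j] n by simp
      with at_j True w show ?thesis by simp
    next
      case False
      then have "0 \<le> hh n j" using hh_ge_minus_one[OF n j(1)] by simp
      with w have "0 \<le> hh n j * w" by simp
      with at_j \<open>\<not> -1 \<le> j\<close> show ?thesis by simp
    qed
    with d n i show ?thesis using reaches_level_dg_0 by simp
  qed
qed

lemma reaches_level_shift_iff:
  assumes "3 \<le> n" "-1 \<le> i" "0 \<le> d" "0 \<le> w" "w \<le> int n - 2"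
  shows "reaches_level n (i + (int n - 1)) w (d + (int n - 1) - w) \<longleftrightarrow> reaches_level n i w d"
  using assms reaches_level_shift[of n i w d] reaches_level_unshift[of n i d w] by auto

lemma dg_le_1_if_reaches_level:
  assumes n: "3 \<le> n" and w: "int n - 1 \<le> w" and "reaches_level n i w d"
  shows "d \<le> 1"
proof -
  obtain j where j: "-1 \<le> j" "hh n j * w + d - 1 \<le> j"
    using assms(3) by (auto simp: reaches_level_def)
  have "0 \<le> hh n j" using hh_nonneg[OF n j(1)] .
  with w have "hh n j * (int n - 1) \<le> hh n j * w" by (rule mult_left_mono)
  with hh_bounds(2)[of n j] n j(2) show ?thesis by simp
qed

lemma reaches_level_at_dg:
  assumes n: "2 \<le> n" and d: "1 \<le> d" and w: "w \<le> int n - 2"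
  shows "reaches_level n ((d - 1) * (int n - 1)) w d"
proof -
  have "(d - 1) * (w + 1) \<le> (d - 1) * (int n - 1)"
    using d w by (intro mult_left_mono) auto
  then have "hh n ((d - 1) * (int n - 1)) * w + d - 1 \<le> (d - 1) * (int n - 1)"
    unfolding hh_mult_period[OF n] by (simp add: algebra_simps)
  moreover have "0 \<le> (d - 1) * (int n - 1)" using d n by simp
  ultimately show ?thesis unfolding reaches_level_def
    by (intro exI[of _ "(d - 1) * (int n - 1)"]) simp
qed

lemma Lset_dg_pos:
  assumes "3 \<le> n" "0 \<le> i" "b \<in> Lset n i"
  shows "1 \<le> dg (fst b) (snd b)"
proof (rule ccontr)
  assume "\<not> 1 \<le> dg (fst b) (snd b)"
  then have "int (dg (fst b) (snd b)) = 0" by simp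
  with assms reaches_level_dg_0[of n "i - 1" "WD n b"] show False by (simp add: Lset_iff)
qed

lemma Lset_WD_le:
  assumes n: "3 \<le> n" and i: "0 \<le> i" and b: "b \<in> Lset n i"
  shows "WD n b \<le> int n - 2"
proof (rule ccontr)
  assume "\<not> WD n b \<le> int n - 2"
  obtain lam k where bk: "b = (lam, k)" by fastforce
  have "1 \<le> k" using b by (auto simp: Lset_iff Bset_def bk)
  have "reaches_level n i (WD n b) (int (dg lam k))" using b by (simp add: Lset_iff bk)
  then have "int (dg lam k) \<le> 1"
    by (rule dg_le_1_if_reaches_level[OF n, rotated]) (use \<open>\<not> WD n b \<le> int n - 2\<close> in simp)
  with Lset_dg_pos[OF assms] have "dg lam k = 1" by (simp add: bk)
  with wt_le_mult_dg[of lam k] have "int (wt lam k) \<le> int k - 1" using \<open>1 \<le> k\<close> by simp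
  with \<open>dg lam k = 1\<close> have "WD n b \<le> int n - 2" by (simp add: WD_def bk)
  with \<open>\<not> WD n b \<le> int n - 2\<close> show False ..
qed

lemma per_mem_Lset_iff:
  assumes n: "3 \<le> n" and i: "0 \<le> i" and b: "b \<in> Bset n" and w: "WD n b \<le> int n - 2"
  shows "per n b \<in> Lset n (i + (int n - 1)) \<longleftrightarrow> b \<in> Lset n i"
proof -
  have k: "2 \<le> snd b" using two_le_snd_if_WD_le[OF b w] .
  have "per n b \<in> Bset n" using per_in_Bset[OF b k] .
  moreover have "WD n (per n b) = WD n b" using WD_per[OF k] .
  moreover have "int (dg (fst (per n b)) (snd (per n b))) = int (dg (fst b) (snd b)) + (int n - 1) - WD n b"
    using dg_per[OF k] w by simp
  moreover have "i + (int n - 1) - 1 = (i - 1) + (int n - 1)" by simp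
  moreover note reaches_level_shift_iff[OF n _ _ WD_nonneg[OF b] w, of i "int (dg (fst b) (snd b))"]
    and reaches_level_shift_iff[OF n _ _ WD_nonneg[OF b] w, of "i - 1" "int (dg (fst b) (snd b))"]
  ultimately show ?thesis using i b unfolding Lset_iff by simp
qed

lemma Lset_x1_exponent_ge:
  assumes n: "3 \<le> n" and i: "(int n - 3) * (int n - 1) < i" and c: "(lam, k) \<in> Lset n i"
  shows "int n - 1 - WD n (lam, k) \<le> int (lam 1)"
proof (rule ccontr)
  assume small: "\<not> int n - 1 - WD n (lam, k) \<le> int (lam 1)"
  have "0 \<le> (int n - 3) * (int n - 1)" using n by simp
  then have i0: "0 \<le> i" using i by linarith
  have w: "WD n (lam, k) \<le> int n - 2" using Lset_WD_le[OF n i0 c] .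
  have d: "1 \<le> int (dg lam k)" using Lset_dg_pos[OF n i0 c] by simp
  have "k \<le> n" using c by (simp add: Lset_iff Bset_def)
  moreover have "2 * dg lam k \<le> wt lam k + lam 1" by (rule two_dg_le_wt_plus)
  ultimately have "int (dg lam k) \<le> int n - 2" using small by (simp add: WD_def)
  then have "(int (dg lam k) - 1) * (int n - 1) \<le> i - 1"
    using mult_right_mono[of "int (dg lam k) - 1" "int n - 3" "int n - 1"] n i
    by (simp add: algebra_simps)
  with reaches_level_at_dg[of n "int (dg lam k)" "WD n (lam, k)"] n d w
  have "reaches_level n (i - 1) (WD n (lam, k)) (int (dg lam k))"
    by (auto intro: reaches_level_mono)
  with c show False by (simp add: Lset_iff)
qed

lemma Lset_subset_per_image:
  assumes n: "3 \<le> n" and i: "0 \<le> i" and big: "(int n - 4) * (int n - 1) < i"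
  shows "Lset n (i + (int n - 1)) \<subseteq> per n ` Lset n i"
proof
  fix c assume c: "c \<in> Lset n (i + (int n - 1))"
  obtain lam k where ck: "c = (lam, k)" by fastforce
  have i': "0 \<le> i + (int n - 1)" using i n by simp
  have cB: "c \<in> Bset n" using c by (simp add: Lset_iff)
  have w: "WD n c \<le> int n - 2" using Lset_WD_le[OF n i' c] .
  have k: "2 \<le> k" using two_le_snd_if_WD_le[OF cB w] by (simp add: ck)
  have "(int n - 3) * (int n - 1) < i + (int n - 1)" using big by (simp add: algebra_simps)
  then have lam1: "int n - 1 - WD n c \<le> int (lam 1)" using Lset_x1_exponent_ge[OF n] c by (simp add: ck)
  define b where "b = (lam(1 := lam 1 - nat (int n - 1 - WD n c)), k)"
  have wb: "WD n b = WD n c" using WD_fun_upd_1[OF k] by (simp add: b_def ck)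
  have bB: "b \<in> Bset n" using cB k by (auto simp: b_def ck Bset_def)
  have "per n b = c" using lam1 wb w by (auto simp: per_def b_def ck)
  moreover have "b \<in> Lset n i" using per_mem_Lset_iff[OF n i bB] wb w c \<open>per n b = c\<close> by simp
  ultimately show "c \<in> per n ` Lset n i" by blast
qed

theorem corollary2p17:
  fixes n :: nat and i :: int
  assumes "n \<ge> 3" and "i \<ge> 0" and "i > (int n - 4) * (int n - 1)"
  shows "(\<forall>b \<in> Lset n i. WD n b \<le> int n - 1)
         \<and> bij_betw (per n) (Lset n i) (Lset n (i + int n - 1))"
proof -
  have WD_le: "WD n b \<le> int n - 2" if "b \<in> Lset n i" for b
    using Lset_WD_le assms that by blast
  have "per n ` Lset n i \<subseteq> Lset n (i + (int n - 1))"
    using per_mem_Lset_iff assms WD_le by (auto simp: Lset_iff)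
  moreover have "Lset n (i + (int n - 1)) \<subseteq> per n ` Lset n i"
    using Lset_subset_per_image assms by simp
  moreover have "inj_on (per n) (Lset n i)"
    by (rule inj_on_subset[OF inj_on_per]) (auto simp: Lset_iff intro: two_le_snd_if_WD_le WD_le)
  ultimately have "bij_betw (per n) (Lset n i) (Lset n (i + (int n - 1)))"
    by (auto simp: bij_betw_def)
  with WD_le show ?thesis by (force simp: add_diff_eq)
qed

end
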